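(* Let $\omega>0$, $T=2\pi/\omega$, and let $H(t)=\begin{pmatrix} a(t) & b(t)\\ b^*(t) & c(t)\end{pmatrix}$ be a continuous $T$-periodic family of $2\times 2$ Hermitian matrices (so $a,c$ real-valued) such that $[H(t),G(t)]=0$ for all $t$, where $G(t)=\begin{pmatrix}0 & e^{-i\omega t}\\ 1 & 0\end{pmatrix}$. Then $a(t)=c(t)$ and $b(t)=b^*(t)e^{-i\omega t}$ for all $t$, and there exists $t$ with $b(t)=0$; in particular the two instantaneous eigenvalues of $H(t)$ coincide at some time $t$ (the spectrum is gapless). *)

theory Defs
  imports "HOL-Analysis.Analysis"
begin

definition mat2 :: "complex \<Rightarrow> complex \<Rightarrow> complex \<Rightarrow> complex \<Rightarrow> complex^2^2" where
  "mat2 x11 x12 x21 x22 = vector [vector [x11, x12], vector [x21, x22]]"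

definition hamH :: "(real \<Rightarrow> real) \<Rightarrow> (real \<Rightarrow> complex) \<Rightarrow> (real \<Rightarrow> real) \<Rightarrow> real \<Rightarrow> complex^2^2" where
  "hamH a b c t = mat2 (complex_of_real (a t)) (b t) (cnj (b t)) (complex_of_real (c t))"

definition symG :: "real \<Rightarrow> real \<Rightarrow> complex^2^2" where
  "symG \<omega> t = mat2 0 (exp (- \<i> * complex_of_real (\<omega> * t))) 1 0"

definition is_eigenvalue :: "complex^2^2 \<Rightarrow> complex \<Rightarrow> bool" where
  "is_eigenvalue M l \<longleftrightarrow> (\<exists>v. v \<noteq> 0 \<and> M *v v = l *s v)"

end

theory Submission
  imports Defs
begin

text \<open>Commuting with G(t) forces a = c and b(t) = e(t) b(t)* with e(t) = exp(-i \<omega> t); equivalently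
  b(t) exp(i \<omega> t/2) is real. Over one period b returns to its value while exp(i \<omega> t/2)
  changes sign, so the real continuous function Re(b(t) exp(i \<omega> t/2)) changes sign and vanishes
  somewhere by the intermediate value theorem. At that time b = 0, H is scalar, and its only
  eigenvalue is a = c.\<close>

lemma mat2_nth [simp]:
  "mat2 x11 x12 x21 x22 $ 1 $ 1 = x11" "mat2 x11 x12 x21 x22 $ 1 $ 2 = x12"
  "mat2 x11 x12 x21 x22 $ 2 $ 1 = x21" "mat2 x11 x12 x21 x22 $ 2 $ 2 = x22"
  by (simp_all add: mat2_def)

lemma mat2_eq_iff:
  "mat2 x11 x12 x21 x22 = mat2 y11 y12 y21 y22 \<longleftrightarrow>
     x11 = y11 \<and> x12 = y12 \<and> x21 = y21 \<and> x22 = y22"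
  by (auto simp: vec_eq_iff forall_2)

lemma mat2_mult_mat2:
  "mat2 x11 x12 x21 x22 ** mat2 y11 y12 y21 y22 =
     mat2 (x11 * y11 + x12 * y21) (x11 * y12 + x12 * y22)
          (x21 * y11 + x22 * y21) (x21 * y12 + x22 * y22)"
  by (simp add: vec_eq_iff forall_2 matrix_matrix_mult_def sum_2)

lemma hermitian_mat2_commute_iff:
  "mat2 x y (cnj y) z ** mat2 0 e 1 0 = mat2 0 e 1 0 ** mat2 x y (cnj y) z \<longleftrightarrow>
     x = z \<and> y = cnj y * e"
  by (auto simp: mat2_mult_mat2 mat2_eq_iff mult.commute)

lemma is_eigenvalue_scalar_mat2:
  assumes "is_eigenvalue (mat2 x 0 0 x) l"
  shows "l = x"
proof -
  obtain v where "v \<noteq> 0" and "mat2 x 0 0 x *v v = l *s v"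
    using assms unfolding is_eigenvalue_def by blast
  moreover have "mat2 x 0 0 x *v v = x *s v"
    by (simp add: vec_eq_iff forall_2 matrix_vector_mult_def sum_2)
  ultimately have "(l - x) *s v = 0"
    by (simp add: algebra_simps)
  with \<open>v \<noteq> 0\<close> show ?thesis
    by simp
qed

lemma continuous_sign_change_has_zero:
  fixes g :: "real \<Rightarrow> real"
  assumes "continuous_on (closed_segment x y) g" and "g y = - g x"
  shows "\<exists>t \<in> closed_segment x y. g t = 0"
proof -
  have "connected (g ` closed_segment x y)"
    using assms(1) by (rule connected_continuous_image) simp
  moreover have "g x \<in> g ` closed_segment x y" "- g x \<in> g ` closed_segment x y"
    using assms(2) by (metis ends_in_segment image_eqI)+
  ultimately have "0 \<in> g ` closed_segment x y"
    unfolding connected_iff_interval by (smt (verit, best))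
  then show ?thesis
    by auto
qed

lemma real_if_eq_cnj_times_phase:
  assumes "z = cnj z * exp (- \<i> * of_real \<phi>)"
  shows "z * exp (\<i> * of_real (\<phi> / 2)) \<in> \<real>"
proof -
  let ?u = "exp (\<i> * of_real (\<phi> / 2))"
  have "exp (- \<i> * of_real \<phi>) = cnj ?u ^ 2" and "cnj ?u * ?u = 1"
    by (simp_all add: exp_cnj flip: exp_of_nat_mult exp_add)
  then have "z * ?u = cnj (z * ?u)"
    by (subst assms) (simp add: power2_eq_square mult.commute mult.left_commute)
  then show ?thesis
    by (simp add: Reals_cnj_iff)
qed

lemma periodic_twisted_real_has_zero:
  fixes b :: "real \<Rightarrow> complex"
  assumes "\<omega> \<noteq> 0" and "continuous_on UNIV b"
    and periodic: "\<And>t. b (t + 2 * pi / \<omega>) = b t"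
    and twisted: "\<And>t. b t = cnj (b t) * exp (- \<i> * of_real (\<omega> * t))"
  shows "\<exists>t. b t = 0"
proof -
  define T where "T = 2 * pi / \<omega>"
  define u where "u t = exp (\<i> * of_real (\<omega> * t / 2))" for t
  define g where "g t = Re (b t * u t)" for t
  have real: "b t * u t \<in> \<real>" for t
    using real_if_eq_cnj_times_phase[OF twisted[of t]] by (simp add: u_def)
  have "\<omega> * T / 2 = pi"
    using assms(1) by (simp add: T_def)
  then have "u T = - u 0"
    by (simp add: u_def)
  then have "g T = - g 0"
    using periodic[of 0] by (simp add: g_def T_def)
  moreover have "continuous_on UNIV g"
    unfolding g_def u_def using assms(2) by (intro continuous_intros) auto
  ultimately obtain t where "g t = 0"
    using continuous_sign_change_has_zero[of 0 T g] continuous_on_subset by blast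
  then have "b t * u t = 0"
    using real[of t] by (simp add: g_def complex_is_Real_iff complex_eq_iff)
  then show ?thesis
    by (auto simp: u_def)
qed

theorem mainTheorem3:
  fixes \<omega> T :: real and a c :: "real \<Rightarrow> real" and b :: "real \<Rightarrow> complex"
  assumes "\<omega> > 0" and "T = 2 * pi / \<omega>"
    and "continuous_on UNIV a" and "continuous_on UNIV b" and "continuous_on UNIV c"
    and "\<And>t. a (t + T) = a t" and "\<And>t. b (t + T) = b t" and "\<And>t. c (t + T) = c t"
    and "\<And>t. hamH a b c t ** symG \<omega> t = symG \<omega> t ** hamH a b c t"
  shows "(\<forall>t. a t = c t \<and> b t = cnj (b t) * exp (- \<i> * complex_of_real (\<omega> * t)))
       \<and> (\<exists>t. b t = 0)
       \<and> (\<exists>t \<mu>. \<forall>l. is_eigenvalue (hamH a b c t) l \<longrightarrow> l = \<mu>)"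
proof -
  have commute: "a t = c t \<and> b t = cnj (b t) * exp (- \<i> * complex_of_real (\<omega> * t))" for t
    using assms(9)[of t] unfolding hamH_def symG_def hermitian_mat2_commute_iff by simp
  obtain t0 where "b t0 = 0"
    using periodic_twisted_real_has_zero[of \<omega> b] assms(1,2,4,7) commute by auto
  then have "hamH a b c t0 = mat2 (a t0) 0 0 (a t0)"
    using commute[of t0] by (simp add: hamH_def)
  then have "\<forall>l. is_eigenvalue (hamH a b c t0) l \<longrightarrow> l = a t0"
    using is_eigenvalue_scalar_mat2 by auto
  then show ?thesis
    using commute \<open>b t0 = 0\<close> by blast
qed

end
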